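(* Let $\lambda$ be a nonzero real number and $n$ a positive integer. Then $$\frac{\lambda^{n-1}}{n}(1)_{n,\frac{1}{\lambda}}=\sum_{k=1}^{n}\beta_{k-1,\lambda}(1-\lambda)\,S_{1,\lambda}(n,k).$$
   Context: For real $y$, $\mu\neq 0$ and integer $k\ge0$: $(y)_{0,\mu}=1$, $(y)_{k,\mu}=y(y-\mu)\cdots(y-(k-1)\mu)$ (used with $\mu=\lambda$ and $\mu=1/\lambda$); $(y)_0=1$, $(y)_k=y(y-1)\cdots(y-k+1)$. The degenerate exponential is $e_\lambda^x(t)=\sum_{k\ge0}(x)_{k,\lambda}t^k/k!=(1+\lambda t)^{x/\lambda}$, $e_\lambda(t)=e^1_\lambda(t)$. The degenerate Bernoulli polynomials are defined by $\frac{t}{e_\lambda(t)-1}e_\lambda^x(t)=\sum_{n\ge0}\beta_{n,\lambda}(x)\frac{t^n}{n!}$. The degenerate Stirling numbers of the first kind are defined by $(x)_{n}=\sum_{k=0}^{n}S_{1,\lambda}(n,k)(x)_{k,\lambda}$ ($n\ge0$). *)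

theory Defs
  imports "HOL-Analysis.Analysis" "HOL-Computational_Algebra.Formal_Power_Series"
begin

definition gen_fall :: "real \<Rightarrow> nat \<Rightarrow> real \<Rightarrow> real" where
  "gen_fall y k mu = (\<Prod>i<k. (y - of_nat i * mu))"

definition fall :: "real \<Rightarrow> nat \<Rightarrow> real" where
  "fall y k = gen_fall y k 1"

definition deg_exp :: "real \<Rightarrow> real \<Rightarrow> real fps" where
  "deg_exp lam x = Abs_fps (\<lambda>k. gen_fall x k lam / fact k)"

definition deg_bernoulli :: "nat \<Rightarrow> real \<Rightarrow> real \<Rightarrow> real" where
  "deg_bernoulli n lam x =
     fact n * fps_nth (fps_X / (deg_exp lam 1 - 1) * deg_exp lam x) n"

definition deg_stirling1 :: "real \<Rightarrow> nat \<Rightarrow> nat \<Rightarrow> real" where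
  "deg_stirling1 lam n k =
     (THE s :: nat \<Rightarrow> real. (\<forall>x. fall x n = (\<Sum>j=0..n. s j * gen_fall x j lam))
                         \<and> (\<forall>j>n. s j = 0)) k"

end

theory Submission
  imports Defs
begin

text \<open>
  The substitution t := log_lambda(1+t) = ((1+t)^lambda - 1)/lambda turns e_lambda^x(t) into
  (1+t)^x = sum_n (x)_n t^n/n!, so S_{1,lambda}(n,k) = n!/k! [t^n] log_lambda(1+t)^k and the
  right-hand side is n! [t^n] A(log_lambda(1+t)), where A is the antiderivative without constant
  term of t e_lambda^{1-lambda}(t)/(e_lambda(t) - 1), the generating function of the
  beta_{k,lambda}(1-lambda). As log_lambda(1+t)' = (1+t)^{lambda-1}, the chain rule gives
  t (A o log_lambda(1+t))' = log_lambda(1+t). Hence n [t^n] A(log_lambda(1+t)) is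
  [t^n] log_lambda(1+t) = (lambda choose n)/lambda, and n! (lambda choose n) = (lambda)_n
  = lambda^n (1)_{n,1/lambda}.
\<close>

unbundle no vec_syntax
unbundle fps_syntax

lemma fps_nth_X_times_deriv: "(fps_X * fps_deriv f) $ n = of_nat n * f $ n"
  by (simp add: fps_mult_fps_X_deriv_shift)

lemma gen_fall_0 [simp]: "gen_fall x 0 mu = 1"
  by (simp add: gen_fall_def)

lemma gen_fall_Suc: "gen_fall x (Suc k) mu = gen_fall x k mu * (x - of_nat k * mu)"
  by (simp add: gen_fall_def)

lemma gen_fall_scale: "gen_fall (c * x) k (c * mu) = c ^ k * gen_fall x k mu"
  by (induction k) (simp_all add: gen_fall_Suc algebra_simps)

lemma fall_eq_fact_gchoose: "fall x n = fact n * (x gchoose n)"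
  by (simp add: fall_def gen_fall_def gbinomial_prod_rev atLeast0LessThan)

lemma fps_nth_deg_exp [simp]: "deg_exp lam x $ k = gen_fall x k lam / fact k"
  by (simp add: deg_exp_def)

lemma deg_exp_ODE:
  "(1 + fps_const lam * fps_X) * fps_deriv (deg_exp lam x) = fps_const x * deg_exp lam x"
proof (rule fps_ext)
  fix n
  let ?E = "deg_exp lam x"
  have deriv: "fps_deriv ?E $ n = gen_fall x n lam * (x - of_nat n * lam) / fact n"
    by (simp add: gen_fall_Suc field_simps del: of_nat_Suc)
  have "((1 + fps_const lam * fps_X) * fps_deriv ?E) $ n
        = fps_deriv ?E $ n + lam * (of_nat n * ?E $ n)"
    by (simp only: distrib_right mult_1 mult.assoc fps_add_nth fps_mult_left_const_nth
        fps_nth_X_times_deriv)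
  also have "\<dots> = (fps_const x * ?E) $ n"
    unfolding deriv by (simp add: field_simps)
  finally show "((1 + fps_const lam * fps_X) * fps_deriv ?E) $ n = (fps_const x * ?E) $ n" .
qed

text \<open>The series of log_lambda(1+t) = ((1+t)^lambda - 1)/lambda, the compositional inverse of
  e_lambda(t) - 1.\<close>

definition deg_log :: "real \<Rightarrow> real fps" where
  "deg_log lam = fps_const (1 / lam) * (fps_binomial lam - 1)"

lemma fps_nth_deg_log: "deg_log lam $ n = (if n = 0 then 0 else (lam gchoose n) / lam)"
  by (simp add: deg_log_def)

lemma fps_nth_deg_log_0 [simp]: "deg_log lam $ 0 = 0"
  by (simp add: fps_nth_deg_log)

lemma deg_log_binomial: "lam \<noteq> 0 \<Longrightarrow> 1 + fps_const lam * deg_log lam = fps_binomial lam"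
  by (simp add: deg_log_def flip: mult.assoc)

lemma fps_deriv_deg_log: "lam \<noteq> 0 \<Longrightarrow> fps_deriv (deg_log lam) = fps_binomial (lam - 1)"
proof -
  assume "lam \<noteq> 0"
  then have "fps_deriv (deg_log lam) = fps_binomial lam * inverse (1 + fps_X)"
    by (simp add: deg_log_def fps_binomial_deriv fps_divide_unit flip: mult.assoc)
  also have "\<dots> = fps_binomial lam * fps_binomial (- 1)"
    by (simp add: fps_binomial_minus_one)
  also have "\<dots> = fps_binomial (lam - 1)"
    by (simp flip: fps_binomial_add_mult)
  finally show ?thesis .
qed

lemma deg_exp_compose_deg_log:
  assumes "lam \<noteq> 0"
  shows "deg_exp lam x oo deg_log lam = fps_binomial x"
proof -
  let ?E = "deg_exp lam x" and ?U = "deg_log lam"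
  have "(1 + fps_X) * fps_deriv (?E oo ?U)
        = (fps_deriv ?E oo ?U) * ((1 + fps_X) * fps_binomial (lam - 1))"
    using assms by (simp add: fps_compose_deriv fps_deriv_deg_log mult_ac)
  also have "(1 + fps_X) * fps_binomial (lam - 1) = (1 + fps_const lam * fps_X) oo ?U"
    using assms by (simp add: fps_compose_add_distrib fps_compose_mult_distrib deg_log_binomial
        flip: fps_binomial_1 fps_binomial_add_mult)
  also have "(fps_deriv ?E oo ?U) * ((1 + fps_const lam * fps_X) oo ?U)
             = ((1 + fps_const lam * fps_X) * fps_deriv ?E) oo ?U"
    by (simp add: fps_compose_mult_distrib mult.commute)
  also have "\<dots> = fps_const x * (?E oo ?U)"
    by (simp add: deg_exp_ODE fps_compose_mult_distrib)
  finally have "fps_deriv (?E oo ?U) = fps_const x * (?E oo ?U) / (1 + fps_X)"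
    by (simp add: unit_eq_div2 mult.commute)
  then show ?thesis
    by (simp add: fps_binomial_ODE_unique' flip: fps_binomial_ODE_unique')
qed

lemma fall_eq_sum_gen_fall:
  assumes "lam \<noteq> 0"
  shows "fall x n = (\<Sum>j=0..n. fact n * (deg_log lam ^ j) $ n / fact j * gen_fall x j lam)"
proof -
  have "fall x n = fact n * (deg_exp lam x oo deg_log lam) $ n"
    using assms by (simp add: fall_eq_fact_gchoose deg_exp_compose_deg_log)
  then show ?thesis
    by (simp add: fps_compose_nth sum_distrib_left mult_ac)
qed

lemma gen_fall_of_nat_mult_eq_0: "m < j \<Longrightarrow> gen_fall (of_nat m * mu) j mu = 0"
  unfolding gen_fall_def by (rule prod_zero) auto

lemma gen_fall_of_nat_mult_self_nonzero: "mu \<noteq> 0 \<Longrightarrow> gen_fall (of_nat m * mu) m mu \<noteq> 0"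
  by (simp add: gen_fall_def flip: left_diff_distrib)

lemma gen_fall_expansion_unique:
  assumes "mu \<noteq> 0"
    and expansions: "\<And>x. (\<Sum>j=0..n. c j * gen_fall x j mu) = (\<Sum>j=0..n. d j * gen_fall x j mu)"
    and "k \<le> n"
  shows "c k = d k"
  using \<open>k \<le> n\<close>
proof (induction k rule: less_induct)
  case (less k)
  \<comment> \<open>at x = k mu the factorials (x)_{j,mu} with j > k vanish\<close>
  let ?x = "of_nat k * mu"
  have "0 = (\<Sum>j=0..n. (c j - d j) * gen_fall ?x j mu)"
    using expansions[of ?x] by (simp add: left_diff_distrib sum_subtractf)
  also have "\<dots> = (\<Sum>j=0..n. if j = k then (c k - d k) * gen_fall ?x k mu else 0)"
    using less by (intro sum.cong) (auto simp: gen_fall_of_nat_mult_eq_0 elim!: linorder_neqE_nat)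
  also have "\<dots> = (c k - d k) * gen_fall ?x k mu"
    using less.prems by simp
  finally show "c k = d k"
    using gen_fall_of_nat_mult_self_nonzero[OF \<open>mu \<noteq> 0\<close>, of k] by simp
qed

lemma deg_stirling1_eq:
  assumes "lam \<noteq> 0"
  shows "deg_stirling1 lam n k = fact n * (deg_log lam ^ k) $ n / fact k"
proof -
  define s where "s j = fact n * (deg_log lam ^ j) $ n / fact j" for j
  let ?expands = "\<lambda>c :: nat \<Rightarrow> real.
     (\<forall>x. fall x n = (\<Sum>j=0..n. c j * gen_fall x j lam)) \<and> (\<forall>j>n. c j = 0)"
  have "?expands s"
    using assms startsby_zero_power_prefix[of "deg_log lam"]
    by (simp add: s_def fall_eq_sum_gen_fall)
  moreover have "c = s" if "?expands c" for c
  proof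
    fix j
    show "c j = s j"
      using that \<open>?expands s\<close>
        gen_fall_expansion_unique[OF assms, where n = n and c = c and d = s and k = j]
      by (cases "j \<le> n") auto
  qed
  ultimately have "deg_stirling1 lam n = s"
    unfolding deg_stirling1_def by (rule the_equality)
  then show ?thesis
    by (simp add: s_def)
qed

definition deg_bernoulli_fps :: "real \<Rightarrow> real \<Rightarrow> real fps" where
  "deg_bernoulli_fps lam x = fps_X / (deg_exp lam 1 - 1) * deg_exp lam x"

lemma deg_bernoulli_eq_fact_nth: "deg_bernoulli n lam x = fact n * deg_bernoulli_fps lam x $ n"
  by (simp add: deg_bernoulli_def deg_bernoulli_fps_def)

lemma deg_exp_1_minus_1_dvd_X: "deg_exp lam 1 - 1 dvd fps_X"
proof -
  have coeff_1: "(deg_exp lam 1 - 1) $ 1 \<noteq> 0"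
    by (simp add: gen_fall_def)
  then have "deg_exp lam 1 - 1 \<noteq> 0"
    by (intro notI) (simp only: fps_zero_nth)
  then show ?thesis
    using subdegree_leI[OF coeff_1] by (simp add: fps_dvd_iff)
qed

lemma deg_bernoulli_fps_times_deg_exp_1_minus_1:
  "deg_bernoulli_fps lam x * (deg_exp lam 1 - 1) = fps_X * deg_exp lam x"
proof -
  have "deg_bernoulli_fps lam x * (deg_exp lam 1 - 1)
        = fps_X / (deg_exp lam 1 - 1) * (deg_exp lam 1 - 1) * deg_exp lam x"
    by (simp only: deg_bernoulli_fps_def mult_ac)
  also have "\<dots> = fps_X * deg_exp lam x"
    by (simp only: dvd_div_mult_self[OF deg_exp_1_minus_1_dvd_X])
  finally show ?thesis .
qed

lemma deg_bernoulli_fps_compose_deg_log: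
  assumes "lam \<noteq> 0"
  shows "(deg_bernoulli_fps lam x oo deg_log lam) * fps_X = deg_log lam * fps_binomial x"
proof -
  have "(deg_bernoulli_fps lam x oo deg_log lam) * ((deg_exp lam 1 oo deg_log lam) - 1)
        = deg_log lam * (deg_exp lam x oo deg_log lam)"
    using arg_cong[OF deg_bernoulli_fps_times_deg_exp_1_minus_1, of "\<lambda>f. f oo deg_log lam"]
    by (simp add: fps_compose_mult_distrib fps_compose_sub_distrib)
  then show ?thesis
    using assms by (simp add: deg_exp_compose_deg_log fps_binomial_1)
qed

lemma fps_nth_integral_deg_bernoulli_fps:
  "fps_integral0 (deg_bernoulli_fps lam x) $ k
   = (if k = 0 then 0 else deg_bernoulli (k - 1) lam x / fact k)"
  by (cases k) (simp_all add: deg_bernoulli_eq_fact_nth field_simps del: of_nat_Suc)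

lemma X_times_deriv_integral_deg_bernoulli_fps_compose_deg_log:
  assumes "lam \<noteq> 0"
  shows "fps_X * fps_deriv (fps_integral0 (deg_bernoulli_fps lam x) oo deg_log lam)
         = deg_log lam * fps_binomial (x + lam - 1)"
proof -
  have "fps_X * fps_deriv (fps_integral0 (deg_bernoulli_fps lam x) oo deg_log lam)
        = ((deg_bernoulli_fps lam x oo deg_log lam) * fps_X) * fps_binomial (lam - 1)"
    using assms by (simp add: fps_compose_deriv fps_deriv_fps_integral fps_deriv_deg_log mult_ac)
  also have "\<dots> = deg_log lam * (fps_binomial x * fps_binomial (lam - 1))"
    unfolding deg_bernoulli_fps_compose_deg_log[OF assms] by (simp add: mult_ac)
  also have "\<dots> = deg_log lam * fps_binomial (x + lam - 1)"
    by (simp add: add_diff_eq flip: fps_binomial_add_mult)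
  finally show ?thesis .
qed

theorem theorem10:
  fixes lam :: real and n :: nat
  assumes "lam \<noteq> 0" and "n \<ge> 1"
  shows "lam ^ (n - 1) / real n * gen_fall 1 n (1 / lam)
         = (\<Sum>k=1..n. deg_bernoulli (k - 1) lam (1 - lam) * deg_stirling1 lam n k)"
proof -
  define B where "B = fps_integral0 (deg_bernoulli_fps lam (1 - lam))"
  have "fps_X * fps_deriv (B oo deg_log lam) = deg_log lam"
    using X_times_deriv_integral_deg_bernoulli_fps_compose_deg_log[OF assms(1), of "1 - lam"]
    by (simp add: B_def)
  then have "real n * (B oo deg_log lam) $ n = deg_log lam $ n"
    by (metis fps_nth_X_times_deriv)
  then have coeff: "(B oo deg_log lam) $ n = (lam gchoose n) / (lam * real n)"
    using assms by (simp add: fps_nth_deg_log field_simps)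
  have "(\<Sum>k=1..n. deg_bernoulli (k - 1) lam (1 - lam) * deg_stirling1 lam n k)
        = fact n * (\<Sum>k=1..n. B $ k * (deg_log lam ^ k) $ n)"
    using assms(1)
    by (simp add: B_def deg_stirling1_eq fps_nth_integral_deg_bernoulli_fps sum_distrib_left mult_ac)
  also have "\<dots> = fact n * (B oo deg_log lam) $ n"
    by (simp add: fps_compose_nth sum.atLeast_Suc_atMost B_def)
  also have "\<dots> = fact n * (lam gchoose n) / (lam * real n)"
    by (simp add: coeff)
  also have "\<dots> = lam ^ n * gen_fall 1 n (1 / lam) / (lam * real n)"
    using gen_fall_scale[of lam 1 n "1 / lam"] assms(1)
    by (simp add: fall_def flip: fall_eq_fact_gchoose)
  also have "\<dots> = lam ^ (n - 1) / real n * gen_fall 1 n (1 / lam)"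
    using assms by (cases n) simp_all
  finally show ?thesis ..
qed

end
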